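(* Let $n\ge2$ and $W_n=(w_{ij},\ 1\le j<i\le n)$ with $w_{ij}>0$. Then for $1\le j\le n-1$, $$\tau^n_j(T^\triangle_n(W_n))=\prod_{\ell=1}^{j-1}w_{j\ell}\prod_{k=j+1}^nw_{kj}.$$
   Context: Triangular arrays are $X=(x_{ij},\ 1\le j<i\le n)$ of positive reals. Their type is $\tau^n_j(X)=D_{nj}(X)/D_{n,j-1}(X)$ where $D_{n0}(X)=1$ and $D_{nj}(X)=x_{nj}x_{n-1,j-1}\cdots x_{n-j+1,1}$ for $1\le j\le n-1$. Local maps: for $i\ge3$, $l_{i1}$ replaces $x_{i1}$ by $x_{i-1,1}x_{i1}$; for $2\le j$ with $j+1<i$, $l_{ij}$ replaces $(x_{i-1,j-1},x_{i-1,j},x_{i,j-1},x_{ij})=(a,b,c,d)$ by $(bc/(ab+ac),b,c,d(b+c))$, other entries unchanged. For $1\le j\le n-2$, $\rho^{\triangle,n}_j=l_{n-j+1,1}\circ l_{n-j+2,2}\circ\cdots\circ l_{n-1,j-1}\circ l_{nj}$. $r^\triangle_{n,n-1}$ replaces $x_{n,n-1}$ by $1/x_{n,n-1}$. With conventions $x_{i0}=1$, $x_{n+1,n-1}=1$: for $k=0,\dots,\lfloor n/2\rfloor-1$, $b^{\triangle,n}_{n-2k,n-2k-1}$ replaces $x_{n-2k,n-2k-1}$ by $x_{n-2k+1,n-2k-1}x_{n-2k,n-2k-2}/x_{n-2k,n-2k-1}$; for $k=1,\dots,\lfloor(n-1)/2\rfloor$, $b^{\triangle,n}_{n-2k+1,n-2k}$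 is the identity. $\rho^{\triangle,n}_{n-1}=b^{\triangle,n}_{2,1}\circ\cdots\circ b^{\triangle,n}_{n,n-1}\circ r^\triangle_{n,n-1}$, $R^\triangle_n=\rho^{\triangle,n}_{n-1}\circ\cdots\circ\rho^{\triangle,n}_1$. $T^\triangle_2(x_{21})=x_{21}$ and for $n\ge3$, $T^\triangle_n(X_n)=R^\triangle_n$ applied to the array whose first $n-1$ rows are $T^\triangle_{n-1}(x_{ij},\ 1\le j<i\le n-1)$ and whose last row is $(x_{n1},\dots,x_{n,n-1})$. *)

theory Defs
  imports Complex_Main
begin

text \<open>A triangular array X = (x_ij, 1 <= j < i <= n) is represented as a function
  X :: nat => nat => real, X i j = x_ij; entries outside the triangle are irrelevant.\<close>

type_synonym tarray = "nat \<Rightarrow> nat \<Rightarrow> real"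

definition D :: "nat \<Rightarrow> nat \<Rightarrow> tarray \<Rightarrow> real" where
  "D n j X = (\<Prod>k<j. X (n - k) (j - k))"

definition tau :: "nat \<Rightarrow> nat \<Rightarrow> tarray \<Rightarrow> real" where
  "tau n j X = D n j X / D n (j - 1) X"

definition lmap :: "nat \<Rightarrow> nat \<Rightarrow> tarray \<Rightarrow> tarray" where
  "lmap i j X =
     (if j = 1 then X(i := (X i)(1 := X (i - 1) 1 * X i 1))
      else (let a = X (i - 1) (j - 1); b = X (i - 1) j; c = X i (j - 1); d = X i j
            in (X(i - 1 := (X (i - 1))(j - 1 := b * c / (a * b + a * c))))
                 (i := (X i)(j := d * (b + c)))))"

text \<open>rho_j = l_{n-j+1,1} o l_{n-j+2,2} o ... o l_{n,j}: l_{n,j} is applied first.\<close>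
definition rho :: "nat \<Rightarrow> nat \<Rightarrow> tarray \<Rightarrow> tarray" where
  "rho n j X = foldl (\<lambda>Y m. lmap (n - j + m) m Y) X (rev [1..<j+1])"

definition rmap :: "nat \<Rightarrow> tarray \<Rightarrow> tarray" where
  "rmap n X = X(n := (X n)(n - 1 := 1 / X n (n - 1)))"

text \<open>Entry access with the conventions x_{i0} = 1 and x_{n+1,n-1} = 1.\<close>
definition getc :: "nat \<Rightarrow> tarray \<Rightarrow> nat \<Rightarrow> nat \<Rightarrow> real" where
  "getc n X i j = (if j = 0 then 1 else if i = n + 1 \<and> j = n - 1 then 1 else X i j)"

definition bmap :: "nat \<Rightarrow> nat \<Rightarrow> tarray \<Rightarrow> tarray" where
  "bmap n i X =
     (if even (n - i) then
        X(i := (X i)(i - 1 := getc n X (i + 1) (i - 1) * getc n X i (i - 2) / X i (i - 1)))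
      else X)"

text \<open>rho_{n-1} = b_{2,1} o ... o b_{n,n-1} o r_{n,n-1}.\<close>
definition rho_last :: "nat \<Rightarrow> tarray \<Rightarrow> tarray" where
  "rho_last n X = foldl (\<lambda>Y i. bmap n i Y) (rmap n X) (rev [2..<n+1])"

definition rho_full :: "nat \<Rightarrow> nat \<Rightarrow> tarray \<Rightarrow> tarray" where
  "rho_full n j X = (if j = n - 1 then rho_last n X else rho n j X)"

text \<open>R_n = rho_{n-1} o ... o rho_1: rho_1 is applied first.\<close>
definition Rmap :: "nat \<Rightarrow> tarray \<Rightarrow> tarray" where
  "Rmap n X = foldl (\<lambda>Y j. rho_full n j Y) X [1..<n]"

fun Ttri :: "nat \<Rightarrow> tarray \<Rightarrow> tarray" where
  "Ttri n X = (if n \<le> 2 then X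
               else Rmap n (\<lambda>i j. if i = n then X i j else Ttri (n - 1) X i j))"

end

theory Submission
  imports Defs
begin

text \<open>Write T_n(W) = R_n(Y), where Y is T_{n-1}(W) with row n of W appended. If l_ij replaces
  (a, d) by (a', d'), then a a' d' = b c d; along the diagonal swept by rho_j these identities
  telescope, so for j <= n - 2 the diagonal product D_nj(R_n Y) equals D_{n-1,j}(Y) w_n1 ... w_nj
  and tau^n_j(T_n W) = tau^{n-1}_j(T_{n-1} W) w_nj. The top type is created by rho_{n-1}, which
  only rewrites the subdiagonal: it equals w_{n,n-1} times the alternating product
  y_{n-1,n-2} / y_{n-2,n-3} * y_{n-3,n-4} / ... of the subdiagonal of Y, and the same computation
  shows that R_n turns this alternating product into the product of row n.\<close>

declare Ttri.simps [simp del]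

section \<open>Diagonal products and the local maps\<close>

definition tarray_pos :: "nat \<Rightarrow> tarray \<Rightarrow> bool" where
  "tarray_pos n X \<longleftrightarrow> (\<forall>i j. 1 \<le> j \<longrightarrow> j < i \<longrightarrow> i \<le> n \<longrightarrow> X i j > 0)"

lemma tarray_posD: "tarray_pos n X \<Longrightarrow> 1 \<le> j \<Longrightarrow> j < i \<Longrightarrow> i \<le> n \<Longrightarrow> X i j > 0"
  by (simp add: tarray_pos_def)

lemma tarray_pos_mono: "tarray_pos n X \<Longrightarrow> m \<le> n \<Longrightarrow> tarray_pos m X"
  by (simp add: tarray_pos_def)

lemma D_0 [simp]: "D n 0 X = 1"
  by (simp add: D_def)

lemma D_Suc: "D n (Suc j) X = X n (Suc j) * D (n - 1) j X"
  unfolding D_def prod.lessThan_Suc_shift by simp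

lemma D_cong: "(\<And>i. i < j \<Longrightarrow> X (n - i) (j - i) = Y (n - i) (j - i)) \<Longrightarrow> D n j X = D n j Y"
  unfolding D_def by (rule prod.cong) auto

lemma D_pos: "tarray_pos N X \<Longrightarrow> j < n \<Longrightarrow> n \<le> N \<Longrightarrow> D n j X > 0"
  unfolding D_def tarray_pos_def by (intro prod_pos) auto

lemma lmap_first_col: "lmap i (Suc 0) X p q = (if p = i \<and> q = 1 then X (i - 1) 1 * X i 1 else X p q)"
  by (simp add: lmap_def)

lemma lmap_apply:
  assumes "j \<noteq> 1" "1 \<le> i"
  shows "lmap i j X p q =
    (if p = i \<and> q = j then X i j * (X (i - 1) j + X i (j - 1))
     else if p = i - 1 \<and> q = j - 1 then X (i - 1) j * X i (j - 1) /
       (X (i - 1) (j - 1) * X (i - 1) j + X (i - 1) (j - 1) * X i (j - 1))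
     else X p q)"
  using assms by (auto simp: lmap_def Let_def)

lemma lmap_outside:
  "1 \<le> j \<Longrightarrow> (p, q) \<noteq> (i, j) \<Longrightarrow> (p, q) \<noteq> (i - 1, j - 1) \<Longrightarrow> lmap i j X p q = X p q"
  by (auto simp: lmap_def Let_def)

lemma lmap_corner_prod:
  assumes "j \<noteq> 1" "1 \<le> i" "X (i - 1) (j - 1) > 0" "X (i - 1) j > 0" "X i (j - 1) > 0"
  shows "X (i - 1) (j - 1) * lmap i j X (i - 1) (j - 1) * lmap i j X i j
       = X (i - 1) j * X i (j - 1) * X i j"
proof -
  define a b c where "a = X (i - 1) (j - 1)" and "b = X (i - 1) j" and "c = X i (j - 1)"
  have "a > 0" "b + c > 0" using assms by (simp_all add: a_def b_def c_def)
  moreover have "a * b + a * c = a * (b + c)" by (simp add: distrib_left)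
  ultimately have "a * (b * c / (a * b + a * c)) * (X i j * (b + c)) = b * c * X i j"
    by simp
  moreover have "lmap i j X (i - 1) (j - 1) = b * c / (a * b + a * c)"
    "lmap i j X i j = X i j * (b + c)"
    using assms by (auto simp: lmap_apply a_def b_def c_def)
  ultimately show ?thesis by (simp add: a_def b_def c_def)
qed

lemma tarray_pos_lmap:
  assumes "tarray_pos N X" "1 \<le> j" "j + 1 < i" "i \<le> N"
  shows "tarray_pos N (lmap i j X)"
proof (cases "j = 1")
  case True
  then show ?thesis
    using assms unfolding tarray_pos_def by (auto simp: lmap_first_col intro!: mult_pos_pos)
next
  case False
  have "X (i - 1) (j - 1) > 0" "X (i - 1) j > 0" "X i (j - 1) > 0" "X i j > 0"
    using assms False by (auto intro: tarray_posD)
  then show ?thesis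
    using assms False unfolding tarray_pos_def
    by (auto simp: lmap_apply intro!: mult_pos_pos divide_pos_pos add_pos_pos)
qed

definition lmap_diag :: "nat \<Rightarrow> nat \<Rightarrow> tarray \<Rightarrow> tarray" where
  "lmap_diag s k X = foldl (\<lambda>Y m. lmap (s + m) m Y) X (rev [1..<k+1])"

lemma lmap_diag_0 [simp]: "lmap_diag s 0 X = X"
  by (simp add: lmap_diag_def)

lemma lmap_diag_Suc: "lmap_diag s (Suc k) X = lmap_diag s k (lmap (s + Suc k) (Suc k) X)"
  by (simp add: lmap_diag_def)

lemma rho_eq_lmap_diag: "rho n j X = lmap_diag (n - j) j X"
  by (simp add: rho_def lmap_diag_def)

lemma lmap_diag_outside:
  "\<not> (p = q + s \<and> 1 \<le> q \<and> q \<le> k) \<Longrightarrow> lmap_diag s k X p q = X p q"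
proof (induction k arbitrary: X)
  case (Suc k)
  then have "lmap_diag s (Suc k) X p q = lmap (s + Suc k) (Suc k) X p q"
    unfolding lmap_diag_Suc by auto
  also have "\<dots> = X p q"
    using Suc.prems by (cases k) (auto simp: lmap_first_col intro!: lmap_outside)
  finally show ?case .
qed simp

lemma tarray_pos_lmap_diag:
  "tarray_pos N X \<Longrightarrow> 2 \<le> s \<Longrightarrow> s + k \<le> N \<Longrightarrow> tarray_pos N (lmap_diag s k X)"
proof (induction k arbitrary: X)
  case (Suc k)
  then have "tarray_pos N (lmap (s + Suc k) (Suc k) X)"
    by (intro tarray_pos_lmap) auto
  with Suc show ?case by (simp add: lmap_diag_Suc)
qed simp

text \<open>The relations of lmap_corner_prod for l_{s+m,m}, m = 1, ..., k + 1, telescope.\<close>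
lemma D_lmap_diag:
  assumes "2 \<le> s" "s + Suc k \<le> N" "tarray_pos N X"
  shows "D (s + Suc k) (Suc k) (lmap_diag s (Suc k) X) * D (s + k) k X
       = X (s + Suc k) (Suc k) * D (s + k) (Suc k) X * D (s + Suc k) k X"
  using assms
proof (induction k arbitrary: X)
  case 0
  then show ?case by (simp add: D_Suc lmap_diag_Suc lmap_first_col)
next
  case (Suc k)
  define i where "i = s + Suc (Suc k)"
  define X' where "X' = lmap i (Suc (Suc k)) X"
  have i: "i - 1 = s + Suc k" "s + k = i - 2" by (simp_all add: i_def)
  have pos': "tarray_pos N X'"
    unfolding X'_def i_def using Suc.prems by (intro tarray_pos_lmap) auto
  have same: "X' p q = X p q" if "p < i - 1 \<or> q < Suc k" "p \<noteq> i" for p q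
    unfolding X'_def using that i by (intro lmap_outside) auto
  have D_same: "D (i - 2) k X' = D (i - 2) k X" "D (i - 2) (Suc k) X' = D (i - 2) (Suc k) X"
      "D (i - 1) k X' = D (i - 1) k X"
    by (rule D_cong, rule same; use i_def in auto)+
  have top: "lmap_diag s (Suc k) X' i (Suc (Suc k)) = X' i (Suc (Suc k))"
    by (rule lmap_diag_outside) (simp add: i_def)
  have corner: "X (i - 1) (Suc k) * X' (i - 1) (Suc k) * X' i (Suc (Suc k))
      = X (i - 1) (Suc (Suc k)) * X i (Suc k) * X i (Suc (Suc k))"
    unfolding X'_def using lmap_corner_prod[of "Suc (Suc k)" i X] Suc.prems
    by (simp add: i_def tarray_posD)
  have "lmap_diag s (Suc (Suc k)) X = lmap_diag s (Suc k) X'"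
    by (simp only: lmap_diag_Suc X'_def i_def)
  then have top_D: "D i (Suc (Suc k)) (lmap_diag s (Suc (Suc k)) X)
      = X' i (Suc (Suc k)) * D (i - 1) (Suc k) (lmap_diag s (Suc k) X')"
    by (simp only: D_Suc[of i "Suc k"] top)
  have "D (i - 1) (Suc k) X = X (i - 1) (Suc k) * D (i - 2) k X'"
    using D_same by (simp add: D_Suc i_def)
  with top_D have "D i (Suc (Suc k)) (lmap_diag s (Suc (Suc k)) X) * D (i - 1) (Suc k) X
      = X' i (Suc (Suc k)) * X (i - 1) (Suc k)
        * (D (i - 1) (Suc k) (lmap_diag s (Suc k) X') * D (i - 2) k X')"
    by (simp add: ac_simps)
  also have "\<dots> = X' i (Suc (Suc k)) * X (i - 1) (Suc k)
        * (X' (i - 1) (Suc k) * D (i - 2) (Suc k) X * D (i - 1) k X)"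
    using Suc.IH[OF _ _ pos'] Suc.prems D_same by (simp add: i_def)
  also have "\<dots> = X (i - 1) (Suc (Suc k)) * X i (Suc k) * X i (Suc (Suc k))
        * D (i - 2) (Suc k) X * D (i - 1) k X"
    using corner by (simp add: ac_simps)
  also have "\<dots> = X i (Suc (Suc k)) * D (i - 1) (Suc (Suc k)) X * D i (Suc k) X"
    by (simp add: D_Suc i_def ac_simps)
  finally show ?case by (simp add: i_def)
qed

section \<open>The map rho_{n-1}\<close>

lemma rmap_apply: "rmap n X p q = (if p = n \<and> q = n - 1 then 1 / X n (n - 1) else X p q)"
  by (simp add: rmap_def)

lemma bmap_apply:
  "bmap n i X p q =
    (if even (n - i) \<and> p = i \<and> q = i - 1
     then getc n X (i + 1) (i - 1) * getc n X i (i - 2) / X i (i - 1) else X p q)"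
  by (simp add: bmap_def)

lemma getc_bmap: "(p, q) \<noteq> (i, i - 1) \<Longrightarrow> getc n (bmap n i X) p q = getc n X p q"
  by (auto simp: getc_def bmap_apply)

text \<open>The maps b_{i,i-1} read only entries they never write, so their composite acts as one
  simultaneous update.\<close>
lemma foldl_bmap_apply:
  assumes "distinct is" "\<forall>i \<in> set is. 2 \<le> i"
  shows "foldl (\<lambda>Y i. bmap n i Y) X is p q =
    (if p \<in> set is \<and> q = p - 1 \<and> even (n - p)
     then getc n X (p + 1) (p - 1) * getc n X p (p - 2) / X p (p - 1) else X p q)"
  using assms
proof (induction "is" arbitrary: X)
  case (Cons i "is")
  show ?case
  proof (cases "p \<in> set is \<and> q = p - 1 \<and> even (n - p)")
    case True
    then have "p \<noteq> i" "2 \<le> p" using Cons.prems by auto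
    then have "getc n (bmap n i X) (p + 1) (p - 1) = getc n X (p + 1) (p - 1)"
      "getc n (bmap n i X) p (p - 2) = getc n X p (p - 2)" "bmap n i X p (p - 1) = X p (p - 1)"
      by (auto intro!: getc_bmap simp: bmap_apply)
    then show ?thesis
      using True Cons.IH[of "bmap n i X"] Cons.prems by simp
  next
    case False
    then show ?thesis using Cons by (auto simp: bmap_apply)
  qed
qed simp

lemma rho_last_apply:
  assumes "2 \<le> n"
  shows "rho_last n X p q =
    (if 2 \<le> p \<and> p \<le> n \<and> q = p - 1 \<and> even (n - p)
     then getc n X (p + 1) (p - 1) * getc n X p (p - 2)
          / (if p = n then 1 / X n (n - 1) else X p (p - 1))
     else X p q)"
proof -
  have "set (rev [2..<n+1]) = {2..n}" by auto
  moreover have "getc n (rmap n X) (p + 1) (p - 1) = getc n X (p + 1) (p - 1)"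
    "getc n (rmap n X) p (p - 2) = getc n X p (p - 2)" if "2 \<le> p"
    using that by (auto simp: getc_def rmap_apply)
  ultimately show ?thesis
    using assms unfolding rho_last_def
    by (subst foldl_bmap_apply) (auto simp: rmap_apply)
qed

lemma rho_last_outside: "2 \<le> n \<Longrightarrow> p \<noteq> q + 1 \<Longrightarrow> rho_last n X p q = X p q"
  by (auto simp: rho_last_apply)

lemma tarray_pos_rho_last:
  assumes pos: "tarray_pos n X" and n: "2 \<le> n"
  shows "tarray_pos n (rho_last n X)"
  unfolding tarray_pos_def
proof (intro allI impI)
  fix i j assume ij: "1 \<le> j" "j < i" "i \<le> n"
  have "getc n X (i + 1) (i - 1) > 0" "getc n X i (i - 2) > 0" "X n (n - 1) > 0" "X i j > 0"
    using ij n pos by (auto simp: getc_def intro!: tarray_posD[OF pos])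
  then show "rho_last n X i j > 0"
    using ij by (auto simp: rho_last_apply[OF n])
qed

definition alt_subdiag :: "nat \<Rightarrow> tarray \<Rightarrow> real" where
  "alt_subdiag m X =
    (\<Prod>k<m - 1. if odd k then 1 / X (m - k) (m - 1 - k) else X (m - k) (m - 1 - k))"

lemma alt_subdiag_cong:
  "(\<And>k. k < m - 1 \<Longrightarrow> X (m - k) (m - 1 - k) = Y (m - k) (m - 1 - k))
   \<Longrightarrow> alt_subdiag m X = alt_subdiag m Y"
  unfolding alt_subdiag_def by (rule prod.cong) auto

text \<open>rho_{n-1} replaces the k-th subdiagonal entry from the bottom, y = x_{n-k,n-k-1}, by
  y * bfactor (k = 0), bfactor / y (k > 0 even) or y (k odd). The factors pair up consecutive
  entries x_{n-k,n-k-2} of the next diagonal, so their product is D_{n,n-2}.\<close>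
definition bfactor :: "nat \<Rightarrow> tarray \<Rightarrow> nat \<Rightarrow> real" where
  "bfactor n X k =
    (if k = 0 then getc n X n (n - 2)
     else if even k then getc n X (n - k + 1) (n - k - 1) * getc n X (n - k) (n - k - 2)
     else 1)"

lemma rho_last_subdiag:
  assumes "2 \<le> n" "k < n - 1"
  shows "rho_last n X (n - k) (n - 1 - k) =
    (if k = 0 then X n (n - 1) else if even k then 1 / X (n - k) (n - 1 - k) else X (n - k) (n - 1 - k))
    * bfactor n X k"
proof -
  have "getc n X (n + 1) (n - 1) = 1" by (simp add: getc_def)
  then show ?thesis
    using assms by (auto simp: rho_last_apply bfactor_def numeral_2_eq_2)
qed

lemma prod_pairs:
  fixes u :: "nat \<Rightarrow> 'a::field"
  assumes "\<And>k. k < K \<Longrightarrow> u k \<noteq> 0"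
  shows "(\<Prod>k<K. if k = 0 then u 0 else if even k then u (k - 1) * u k else 1)
       = (\<Prod>k<K. u k) / (if even K \<and> K \<noteq> 0 then u (K - 1) else 1)"
  using assms
proof (induction K)
  case (Suc K)
  have "u K \<noteq> 0" "K \<noteq> 0 \<Longrightarrow> u (K - 1) \<noteq> 0" using Suc.prems by auto
  then show ?case
    using Suc by (auto simp: field_simps)
qed simp

lemma prod_bfactor:
  assumes "2 \<le> n" "tarray_pos n X"
  shows "(\<Prod>k<n - 1. bfactor n X k) = D n (n - 2) X"
proof -
  define u where "u k = getc n X (n - k) (n - k - 2)" for k
  have u_last: "u (n - 2) = 1" by (simp add: u_def getc_def)
  have u_nz: "u k \<noteq> 0" if "k < n - 1" for k
  proof (cases "k = n - 2")
    case False
    then have "X (n - k) (n - k - 2) > 0" using that assms by (intro tarray_posD) auto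
    then show ?thesis using that False by (simp add: u_def getc_def)
  qed (simp add: u_last)
  have n: "n - 1 = Suc (n - 2)" using assms by simp
  have "(\<Prod>k<n - 1. bfactor n X k)
      = (\<Prod>k<n - 1. if k = 0 then u 0 else if even k then u (k - 1) * u k else 1)"
    by (rule prod.cong) (auto simp: bfactor_def u_def Suc_diff_le)
  also have "\<dots> = (\<Prod>k<n - 1. u k)"
    using prod_pairs[of "n - 1" u] u_nz u_last n by simp
  also have "\<dots> = (\<Prod>k<n - 2. u k)"
    unfolding n by (simp add: u_last)
  also have "\<dots> = D n (n - 2) X"
    unfolding D_def by (rule prod.cong) (auto simp: u_def getc_def)
  finally show ?thesis .
qed

lemma alt_subdiag_shift:
  "alt_subdiag (n - 1) X =
    (\<Prod>k<n - 2. if odd k then 1 / X (n - Suc k) (n - 1 - Suc k) else X (n - Suc k) (n - 1 - Suc k))"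
  unfolding alt_subdiag_def
proof (rule prod.cong)
  fix k
  have "n - 1 - k = n - Suc k" "n - 1 - 1 - k = n - 1 - Suc k" by arith+
  then show "(if odd k then 1 / X (n - 1 - k) (n - 1 - 1 - k) else X (n - 1 - k) (n - 1 - 1 - k))
    = (if odd k then 1 / X (n - Suc k) (n - 1 - Suc k) else X (n - Suc k) (n - 1 - Suc k))"
    by (simp only:)
qed simp

lemma prod_lessThan_pred_shift:
  "2 \<le> n \<Longrightarrow> (\<Prod>k<n - 1. f k) = f 0 * (\<Prod>k<n - 2. f (Suc k))"
  using prod.lessThan_Suc_shift[of f "n - 2"] by (simp add: Suc_diff_Suc numeral_2_eq_2)

lemma D_rho_last:
  assumes "3 \<le> n" "tarray_pos n X"
  shows "D n (n - 1) (rho_last n X) = X n (n - 1) * alt_subdiag (n - 1) X * D n (n - 2) X"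
proof -
  define x where "x k =
    (if k = 0 then X n (n - 1) else if even k then 1 / X (n - k) (n - 1 - k) else X (n - k) (n - 1 - k))"
    for k
  have bfactors: "(\<Prod>k<n - 1. bfactor n X k) = D n (n - 2) X"
    using assms by (intro prod_bfactor) auto
  have "D n (n - 1) (rho_last n X) = (\<Prod>k<n - 1. x k * bfactor n X k)"
    unfolding D_def x_def using assms by (intro prod.cong refl rho_last_subdiag) auto
  also have "\<dots> = (\<Prod>k<n - 1. x k) * D n (n - 2) X"
    by (simp only: prod.distrib bfactors)
  also have "(\<Prod>k<n - 1. x k) = X n (n - 1) * alt_subdiag (n - 1) X"
    unfolding alt_subdiag_shift using assms
    by (subst prod_lessThan_pred_shift) (simp_all add: x_def)
  finally show ?thesis .
qed

lemma alt_subdiag_rho_last: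
  assumes "3 \<le> n" "tarray_pos n X"
  shows "alt_subdiag n (rho_last n X) = X n (n - 1) * D n (n - 2) X / D (n - 1) (n - 2) X"
proof -
  define x where "x k = (if k = 0 then X n (n - 1) else 1 / X (n - k) (n - 1 - k))" for k
  have bfactors: "(\<Prod>k<n - 1. bfactor n X k) = D n (n - 2) X"
    using assms by (intro prod_bfactor) auto
  have "alt_subdiag n (rho_last n X) = (\<Prod>k<n - 1. x k * bfactor n X k)"
    unfolding alt_subdiag_def
  proof (rule prod.cong)
    fix k assume "k \<in> {..<n - 1}"
    then have "rho_last n X (n - k) (n - 1 - k) =
      (if k = 0 then X n (n - 1) else if even k then 1 / X (n - k) (n - 1 - k) else X (n - k) (n - 1 - k))
      * bfactor n X k"
      using assms by (intro rho_last_subdiag) auto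
    then show "(if odd k then 1 / rho_last n X (n - k) (n - 1 - k) else rho_last n X (n - k) (n - 1 - k))
      = x k * bfactor n X k"
      by (simp add: x_def bfactor_def)
  qed simp
  also have "\<dots> = (\<Prod>k<n - 1. x k) * D n (n - 2) X"
    by (simp only: prod.distrib bfactors)
  also have "(\<Prod>k<n - 1. x k) = X n (n - 1) / D (n - 1) (n - 2) X"
    unfolding D_def using assms
    by (subst prod_lessThan_pred_shift) (simp_all add: x_def prod_dividef[where f = "\<lambda>_. 1", simplified])
  finally show ?thesis by simp
qed

section \<open>The map R_n\<close>

definition Rmap_upto :: "nat \<Rightarrow> nat \<Rightarrow> tarray \<Rightarrow> tarray" where
  "Rmap_upto n k X = foldl (\<lambda>Y j. rho_full n j Y) X [1..<k+1]"

lemma Rmap_upto_0 [simp]: "Rmap_upto n 0 X = X"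
  by (simp add: Rmap_upto_def)

lemma Rmap_upto_Suc: "Rmap_upto n (Suc k) X = rho_full n (Suc k) (Rmap_upto n k X)"
  by (simp add: Rmap_upto_def)

lemma Rmap_eq_Rmap_upto: "Rmap n X = Rmap_upto n (n - 1) X"
  by (cases n) (simp_all add: Rmap_def Rmap_upto_def)

lemma Rmap_eq_rho_last: "2 \<le> n \<Longrightarrow> Rmap n X = rho_last n (Rmap_upto n (n - 2) X)"
  using Rmap_upto_Suc[of n "n - 2" X]
  by (simp add: Rmap_eq_Rmap_upto rho_full_def Suc_diff_Suc numeral_2_eq_2)

lemma rho_full_outside:
  assumes "1 \<le> j" "j \<le> n - 1" "p \<noteq> q + (n - j)"
  shows "rho_full n j X p q = X p q"
proof (cases "j = n - 1")
  case True
  then show ?thesis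
    using assms by (auto simp: rho_full_def intro!: rho_last_outside)
next
  case False
  then show ?thesis
    using assms by (auto simp: rho_full_def rho_eq_lmap_diag intro!: lmap_diag_outside)
qed

lemma tarray_pos_rho_full:
  "tarray_pos n X \<Longrightarrow> 2 \<le> n \<Longrightarrow> j \<le> n - 1 \<Longrightarrow> tarray_pos n (rho_full n j X)"
  by (cases "j = n - 1")
    (auto simp: rho_full_def rho_eq_lmap_diag intro!: tarray_pos_rho_last tarray_pos_lmap_diag)

lemma tarray_pos_Rmap_upto:
  "tarray_pos n X \<Longrightarrow> 2 \<le> n \<Longrightarrow> k \<le> n - 1 \<Longrightarrow> tarray_pos n (Rmap_upto n k X)"
  by (induction k) (auto simp: Rmap_upto_Suc intro!: tarray_pos_rho_full)

lemma tarray_pos_Rmap: "tarray_pos n X \<Longrightarrow> 2 \<le> n \<Longrightarrow> tarray_pos n (Rmap n X)"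
  by (simp add: Rmap_eq_Rmap_upto tarray_pos_Rmap_upto)

lemma Rmap_upto_outside:
  assumes "k1 \<le> k2" "k2 \<le> n - 1" "\<And>j. k1 < j \<Longrightarrow> j \<le> k2 \<Longrightarrow> p \<noteq> q + (n - j)"
  shows "Rmap_upto n k2 X p q = Rmap_upto n k1 X p q"
  using assms
proof (induction k2)
  case (Suc k2)
  show ?case
  proof (cases "k1 = Suc k2")
    case False
    then have "Rmap_upto n (Suc k2) X p q = Rmap_upto n k2 X p q"
      unfolding Rmap_upto_Suc using Suc.prems by (intro rho_full_outside) auto
    then show ?thesis using Suc False by auto
  qed simp
qed simp

lemma Rmap_upto_subdiag: "k \<le> n - 2 \<Longrightarrow> Rmap_upto n k X (Suc q) q = X (Suc q) q"
  using Rmap_upto_outside[of 0 k n "Suc q" q X] by auto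

lemma D_Rmap_upto:
  assumes "k1 \<le> k2" "k2 \<le> n - 1" "j \<le> m" "\<And>j'. k1 < j' \<Longrightarrow> j' \<le> k2 \<Longrightarrow> m - j \<noteq> n - j'"
  shows "D m j (Rmap_upto n k2 X) = D m j (Rmap_upto n k1 X)"
proof (rule D_cong)
  fix i assume i: "i < j"
  show "Rmap_upto n k2 X (m - i) (j - i) = Rmap_upto n k1 X (m - i) (j - i)"
  proof (rule Rmap_upto_outside)
    fix j' assume "k1 < j'" "j' \<le> k2"
    then have "m - j \<noteq> n - j'" by (rule assms(4))
    then show "m - i \<noteq> j - i + (n - j')" using i assms(3) by arith
  qed (use assms in auto)
qed

lemma D_Rmap_step:
  assumes "Suc j \<le> n - 2" "tarray_pos n Y"
  shows "D n (Suc j) (Rmap n Y) * D (n - 1) j Y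
       = Y n (Suc j) * D (n - 1) (Suc j) Y * D n j (Rmap n Y)"
proof -
  define X where "X = Rmap_upto n j Y"
  have pos: "tarray_pos n X"
    unfolding X_def using assms by (intro tarray_pos_Rmap_upto) auto
  have s: "n - Suc j + Suc j = n" "n - Suc j + j = n - 1" using assms by auto
  have "Suc j \<noteq> n - 1" using assms by arith
  then have "Rmap_upto n (Suc j) Y = lmap_diag (n - Suc j) (Suc j) X"
    by (simp add: X_def Rmap_upto_Suc rho_full_def rho_eq_lmap_diag)
  then have "D n (Suc j) (Rmap_upto n (Suc j) Y) * D (n - 1) j X
      = X n (Suc j) * D (n - 1) (Suc j) X * D n j X"
    using D_lmap_diag[of "n - Suc j" j n X, unfolded s] pos assms by simp
  moreover have "D n (Suc j) (Rmap n Y) = D n (Suc j) (Rmap_upto n (Suc j) Y)"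
    unfolding Rmap_eq_Rmap_upto by (rule D_Rmap_upto) (use assms in auto)
  moreover have "D n j X = D n j (Rmap n Y)"
    unfolding Rmap_eq_Rmap_upto X_def by (rule D_Rmap_upto[symmetric]) (use assms in auto)
  moreover have "D (n - 1) j X = D (n - 1) j Y" "D (n - 1) (Suc j) X = D (n - 1) (Suc j) Y"
    using D_Rmap_upto[of 0 j n _ "n - 1" Y] assms by (auto simp: X_def)
  moreover have "X n (Suc j) = Y n (Suc j)"
    using Rmap_upto_outside[of 0 j n n "Suc j" Y] assms by (auto simp: X_def)
  ultimately show ?thesis by simp
qed

lemma D_Rmap:
  assumes "j \<le> n - 2" "tarray_pos n Y"
  shows "D n j (Rmap n Y) = D (n - 1) j Y * (\<Prod>k = 1..j. Y n k)"
  using assms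
proof (induction j)
  case (Suc j)
  have "D (n - 1) j Y > 0" using Suc.prems by (intro D_pos[where N = n]) auto
  moreover have "D n (Suc j) (Rmap n Y) * D (n - 1) j Y
      = D (n - 1) (Suc j) Y * (\<Prod>k = 1..Suc j. Y n k) * D (n - 1) j Y"
    using D_Rmap_step[of j n Y] Suc by (simp add: prod.cl_ivl_Suc ac_simps)
  ultimately show ?case by simp
qed simp

lemma D_Rmap_last:
  assumes "3 \<le> n" "tarray_pos n Y"
  shows "D n (n - 1) (Rmap n Y) = Y n (n - 1) * alt_subdiag (n - 1) Y * D n (n - 2) (Rmap n Y)"
proof -
  define X where "X = Rmap_upto n (n - 2) Y"
  have "tarray_pos n X"
    unfolding X_def using assms by (intro tarray_pos_Rmap_upto) auto
  then have "D n (n - 1) (Rmap n Y) = X n (n - 1) * alt_subdiag (n - 1) X * D n (n - 2) X"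
    using D_rho_last[of n X] Rmap_eq_rho_last[of n Y] assms by (simp add: X_def)
  moreover have "X n (n - 1) = Y n (n - 1)"
    using Rmap_upto_subdiag[of "n - 2" n Y "n - 1"] assms by (simp add: X_def)
  moreover have "alt_subdiag (n - 1) X = alt_subdiag (n - 1) Y"
  proof (rule alt_subdiag_cong)
    fix k assume "k < n - 1 - 1"
    then have row: "n - 1 - k = Suc (n - 1 - 1 - k)" by arith
    have "X (Suc (n - 1 - 1 - k)) (n - 1 - 1 - k) = Y (Suc (n - 1 - 1 - k)) (n - 1 - 1 - k)"
      unfolding X_def by (rule Rmap_upto_subdiag) simp
    then show "X (n - 1 - k) (n - 1 - 1 - k) = Y (n - 1 - k) (n - 1 - 1 - k)"
      by (simp only: row)
  qed
  moreover have "D n (n - 2) X = D n (n - 2) (Rmap n Y)"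
    unfolding X_def Rmap_eq_Rmap_upto by (rule D_Rmap_upto[symmetric]) (use assms in auto)
  ultimately show ?thesis by simp
qed

lemma alt_subdiag_Rmap:
  assumes "3 \<le> n" "tarray_pos n Y"
  shows "alt_subdiag n (Rmap n Y) = (\<Prod>k = 1..n - 1. Y n k)"
proof -
  define X where "X = Rmap_upto n (n - 2) Y"
  have "tarray_pos n X"
    unfolding X_def using assms by (intro tarray_pos_Rmap_upto) auto
  then have "alt_subdiag n (Rmap n Y) = X n (n - 1) * D n (n - 2) X / D (n - 1) (n - 2) X"
    using assms by (simp add: Rmap_eq_rho_last alt_subdiag_rho_last X_def)
  moreover have "X n (n - 1) = Y n (n - 1)"
    using Rmap_upto_subdiag[of "n - 2" n Y "n - 1"] assms by (simp add: X_def)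
  moreover have "D n (n - 2) X = D (n - 1) (n - 2) Y * (\<Prod>k = 1..n - 2. Y n k)"
  proof -
    have "D n (n - 2) X = D n (n - 2) (Rmap n Y)"
      unfolding X_def Rmap_eq_Rmap_upto by (rule D_Rmap_upto[symmetric]) (use assms in auto)
    then show ?thesis using D_Rmap[of "n - 2" n Y] assms by simp
  qed
  moreover have "D (n - 1) (n - 2) X = D (n - 1) (n - 2) Y"
    using D_Rmap_upto[of 0 "n - 2" n "n - 2" "n - 1" Y] assms by (auto simp: X_def)
  moreover have "D (n - 1) (n - 2) Y > 0"
    using assms by (intro D_pos[where N = n]) auto
  moreover have "(\<Prod>k = 1..n - 1. Y n k) = (\<Prod>k = 1..n - 2. Y n k) * Y n (n - 1)"
    using prod.cl_ivl_Suc[of "\<lambda>k. Y n k" 1 "n - 2"] assms by (simp add: Suc_diff_Suc numeral_2_eq_2)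
  ultimately show ?thesis by simp
qed

lemma tau_Rmap:
  assumes "1 \<le> j" "j \<le> n - 2" "tarray_pos n Y"
  shows "tau n j (Rmap n Y) = tau (n - 1) j Y * Y n j"
proof -
  obtain i where j: "j = Suc i" using assms by (cases j) auto
  define P where "P = (\<Prod>k = 1..i. Y n k)"
  have "P > 0"
    unfolding P_def using assms by (intro prod_pos) (auto simp: j intro: tarray_posD)
  moreover have "D (n - 1) i Y > 0"
    using assms by (intro D_pos[where N = n]) (auto simp: j)
  moreover have "D n (Suc i) (Rmap n Y) = D (n - 1) (Suc i) Y * P * Y n (Suc i)"
    using D_Rmap[of j n Y] assms by (simp add: j P_def prod.cl_ivl_Suc)
  moreover have "D n i (Rmap n Y) = D (n - 1) i Y * P"
    using D_Rmap[of i n Y] assms by (simp add: j P_def)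
  ultimately show ?thesis by (simp add: tau_def j field_simps)
qed

lemma tau_Rmap_last:
  assumes "3 \<le> n" "tarray_pos n Y"
  shows "tau n (n - 1) (Rmap n Y) = Y n (n - 1) * alt_subdiag (n - 1) Y"
proof -
  have "D n (n - 2) (Rmap n Y) > 0"
    using assms by (intro D_pos[where N = n] tarray_pos_Rmap) auto
  moreover have "n - 1 - 1 = n - 2" by arith
  ultimately show ?thesis
    unfolding tau_def D_Rmap_last[OF assms] by simp
qed

section \<open>The array T_n\<close>

definition append_row :: "nat \<Rightarrow> tarray \<Rightarrow> tarray \<Rightarrow> tarray" where
  "append_row n W X i j = (if i = n then W i j else X i j)"

lemma append_row_same [simp]: "append_row n W X n j = W n j"
  by (simp add: append_row_def)

lemma Ttri_le2: "n \<le> 2 \<Longrightarrow> Ttri n W = W"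
  by (subst Ttri.simps) simp

lemma Ttri_step:
  assumes "3 \<le> n"
  shows "Ttri n W = Rmap n (append_row n W (Ttri (n - 1) W))"
proof -
  have "\<not> n \<le> 2" using assms by simp
  then show ?thesis
    unfolding append_row_def by (subst Ttri.simps) (simp only: if_False)
qed

lemma tarray_pos_append_row:
  "tarray_pos (n - 1) X \<Longrightarrow> tarray_pos n W \<Longrightarrow> tarray_pos n (append_row n W X)"
  by (auto simp: tarray_pos_def append_row_def)

lemma D_append_row: "m < n \<Longrightarrow> D m j (append_row n W X) = D m j X"
  by (rule D_cong) (auto simp: append_row_def)

lemma tau_append_row: "m < n \<Longrightarrow> tau m j (append_row n W X) = tau m j X"
  by (simp add: tau_def D_append_row)

lemma alt_subdiag_append_row: "m < n \<Longrightarrow> alt_subdiag m (append_row n W X) = alt_subdiag m X"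
  by (rule alt_subdiag_cong) (auto simp: append_row_def)

lemma tarray_pos_Ttri: "2 \<le> n \<Longrightarrow> tarray_pos n W \<Longrightarrow> tarray_pos n (Ttri n W)"
proof (induction n rule: nat_induct_at_least)
  case (Suc n)
  then have "tarray_pos n (Ttri n W)"
    using tarray_pos_mono[of "Suc n" W n] by simp
  with Suc.prems have "tarray_pos (Suc n) (append_row (Suc n) W (Ttri n W))"
    by (intro tarray_pos_append_row) simp_all
  then show ?case
    using Suc by (simp add: Ttri_step tarray_pos_Rmap)
qed (simp add: Ttri_le2)

lemma tarray_pos_append_Ttri:
  "2 \<le> m \<Longrightarrow> tarray_pos (Suc m) W \<Longrightarrow> tarray_pos (Suc m) (append_row (Suc m) W (Ttri m W))"
  using tarray_pos_Ttri[of m W] tarray_pos_mono[of "Suc m" W m]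
  by (intro tarray_pos_append_row) simp_all

lemma alt_subdiag_Ttri:
  assumes "2 \<le> n" "tarray_pos n W"
  shows "alt_subdiag n (Ttri n W) = (\<Prod>l = 1..n - 1. W n l)"
proof (cases "n = 2")
  case True
  then show ?thesis by (simp add: Ttri_le2 alt_subdiag_def)
next
  case False
  then have n: "3 \<le> n" using assms by simp
  have "tarray_pos n (append_row n W (Ttri (n - 1) W))"
    using tarray_pos_append_Ttri[of "n - 1" W] assms n by simp
  then show ?thesis
    using n by (simp add: Ttri_step alt_subdiag_Rmap)
qed

lemma tau_Ttri:
  assumes "2 \<le> n" "tarray_pos n W" "1 \<le> j" "j \<le> n - 1"
  shows "tau n j (Ttri n W) = (\<Prod>l = 1..j - 1. W j l) * (\<Prod>k = j + 1..n. W k j)"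
  using assms
proof (induction n arbitrary: j rule: nat_induct_at_least)
  case base
  then show ?case by (simp add: Ttri_le2 tau_def D_def numeral_2_eq_2)
next
  case (Suc m)
  define Y where "Y = append_row (Suc m) W (Ttri m W)"
  have pos: "tarray_pos (Suc m) Y"
    unfolding Y_def using Suc by (intro tarray_pos_append_Ttri) simp_all
  have T: "Ttri (Suc m) W = Rmap (Suc m) Y"
    using Suc by (simp add: Ttri_step Y_def)
  have rows: "(\<Prod>k = j + 1..Suc m. W k j) = (\<Prod>k = j + 1..m. W k j) * W (Suc m) j"
    using Suc by (simp add: prod.cl_ivl_Suc)
  show ?case
  proof (cases "j \<le> m - 1")
    case True
    then have "tau (Suc m) j (Ttri (Suc m) W) = tau m j (Ttri m W) * W (Suc m) j"
      using Suc pos by (simp add: T tau_Rmap Y_def tau_append_row)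
    moreover have "tarray_pos m W"
      using Suc.prems(1) by (rule tarray_pos_mono) simp
    ultimately show ?thesis
      using Suc.IH[of j] Suc.prems True rows by simp
  next
    case False
    then have j: "j = m" using Suc by simp
    have "tau (Suc m) m (Ttri (Suc m) W) = W (Suc m) m * alt_subdiag m (Ttri m W)"
      using Suc pos tau_Rmap_last[of "Suc m" Y]
      by (simp add: T Y_def alt_subdiag_append_row append_row_def)
    also have "\<dots> = W (Suc m) m * (\<Prod>l = 1..m - 1. W m l)"
      using Suc by (simp add: alt_subdiag_Ttri tarray_pos_mono)
    finally show ?thesis using j rows by simp
  qed
qed

theorem proposition6p5:
  fixes n :: nat and W :: tarray
  assumes "n \<ge> 2"
    and "\<And>i j. 1 \<le> j \<Longrightarrow> j < i \<Longrightarrow> i \<le> n \<Longrightarrow> W i j > 0"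
  shows "\<forall>j. 1 \<le> j \<and> j \<le> n - 1 \<longrightarrow>
           tau n j (Ttri n W) = (\<Prod>l = 1..j - 1. W j l) * (\<Prod>k = j + 1..n. W k j)"
  using tau_Ttri[OF assms(1)] assms(2) by (simp add: tarray_pos_def)

end
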